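(* For each $N\ge2$ let $L=\frac{2}{N-1}\sum_{1\le i<j\le N}(Q_{(i,j)}-I)$ act on bounded measurable functions on ${\mathbb T}_N=({\mathbb S}^1)^N$, where each $Q_{(i,j)}$ is a Markov operator acting only through $v_i,v_j$ (so $Q_{(i,j)}\varphi=\varphi$ whenever $\varphi$ depends on neither $v_i$ nor $v_j$). Let $\varphi\in L^\infty$ be a function depending only on $v_1,\dots,v_p$ (for a fixed $p$), regarded as a function on ${\mathbb T}_N$ for every $N\ge p$. Then the power series $e^{tL}\varphi=\sum_{k=0}^\infty\frac{t^k}{k!}L^k\varphi$ converges absolutely in $L^\infty$, uniformly in $N$ and in $t\in[0,T]$, for any $T<1/4$.
   Context: ${\mathbb S}^1$ is the unit circle; a Markov operator is a positive linear operator $Q$ with $Q1=1$, so $\|Q\varphi\|_\infty\le\|\varphi\|_\infty$. *)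

theory Defs
  imports "HOL-Analysis.Analysis"
begin

text \<open>The torus T_N = (S^1)^N, points indexed by 0..N-1 (coordinate v_{k+1} is index k),
  extensional outside {..<N}.\<close>
definition torus :: "nat \<Rightarrow> (nat \<Rightarrow> complex) set" where
  "torus N = PiE {..<N} (\<lambda>_. sphere (0::complex) 1)"

definition circ2 :: "(complex \<times> complex) set" where
  "circ2 = sphere (0::complex) 1 \<times> sphere (0::complex) 1"

definition bounded_on :: "'a set \<Rightarrow> ('a \<Rightarrow> real) \<Rightarrow> bool" where
  "bounded_on S f \<longleftrightarrow> bdd_above ((\<lambda>x. \<bar>f x\<bar>) ` S)"

definition markov_op :: "((complex \<times> complex \<Rightarrow> real) \<Rightarrow> (complex \<times> complex \<Rightarrow> real)) \<Rightarrow> bool" where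
  "markov_op Q \<longleftrightarrow>
     (\<forall>f g a b. bounded_on circ2 f \<longrightarrow> bounded_on circ2 g \<longrightarrow>
        (\<forall>z\<in>circ2. Q (\<lambda>w. a * f w + b * g w) z = a * Q f z + b * Q g z)) \<and>
     (\<forall>f. bounded_on circ2 f \<longrightarrow> (\<forall>w\<in>circ2. 0 \<le> f w) \<longrightarrow> (\<forall>z\<in>circ2. 0 \<le> Q f z)) \<and>
     (\<forall>z\<in>circ2. Q (\<lambda>_. 1) z = 1)"

definition lift_op :: "nat \<Rightarrow> nat \<Rightarrow> ((complex \<times> complex \<Rightarrow> real) \<Rightarrow> (complex \<times> complex \<Rightarrow> real))
     \<Rightarrow> ((nat \<Rightarrow> complex) \<Rightarrow> real) \<Rightarrow> ((nat \<Rightarrow> complex) \<Rightarrow> real)" where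
  "lift_op i j q \<phi> = (\<lambda>x. q (\<lambda>(a, b). \<phi> (x(i := a, j := b))) (x i, x j))"

definition genL :: "nat \<Rightarrow> (nat \<Rightarrow> nat \<Rightarrow> ((complex \<times> complex \<Rightarrow> real) \<Rightarrow> (complex \<times> complex \<Rightarrow> real)))
     \<Rightarrow> ((nat \<Rightarrow> complex) \<Rightarrow> real) \<Rightarrow> ((nat \<Rightarrow> complex) \<Rightarrow> real)" where
  "genL N q \<phi> = (\<lambda>x. 2 / (real N - 1) *
      (\<Sum>(i, j)\<in>{(i, j). i < j \<and> j < N}. (lift_op i j (q i j) \<phi> x - \<phi> x)))"

definition supnorm :: "nat \<Rightarrow> ((nat \<Rightarrow> complex) \<Rightarrow> real) \<Rightarrow> real" where
  "supnorm N f = (SUP x\<in>torus N. \<bar>f x\<bar>)"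

end

theory Submission
  imports Defs
begin

text \<open>If \<open>\<psi>\<close> depends only on a set \<open>D\<close> of \<open>m\<close> coordinates, then \<open>L \<psi>\<close> is a sum over the at most
  \<open>m (N - 1)\<close> pairs \<open>(i, j)\<close> touching \<open>D\<close> (the other terms vanish because \<open>Q\<^sub>(\<^sub>i\<^sub>,\<^sub>j\<^sub>)\<close> fixes \<open>\<psi>\<close>), each of
  sup norm at most \<open>4 \<parallel>\<psi>\<parallel> / (N - 1)\<close> and depending on at most \<open>m + 1\<close> coordinates. Iterating,
  \<open>\<parallel>L\<^sup>k \<psi>\<parallel> \<le> 4\<^sup>k m (m + 1) \<dots> (m + k - 1) \<parallel>\<psi>\<parallel>\<close>, independently of \<open>N\<close>, and
  \<open>\<Sum>\<^sub>k (4T)\<^sup>k m (m + 1) \<dots> (m + k - 1) / k! = (1 - 4T)\<^sup>-\<^sup>m\<close> converges for \<open>T < 1/4\<close>.\<close>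

lemma bounded_on_iff: "bounded_on S f \<longleftrightarrow> (\<exists>B. \<forall>x\<in>S. \<bar>f x\<bar> \<le> B)"
  by (auto simp: bounded_on_def bdd_above_def)

lemma bounded_on_const: "bounded_on S (\<lambda>_. c)"
  by (auto simp: bounded_on_iff)

lemma bounded_on_linear_comb:
  assumes "bounded_on S f" "bounded_on S g"
  shows "bounded_on S (\<lambda>w. a * f w + b * g w)"
proof -
  obtain B1 B2 where B1: "\<forall>x\<in>S. \<bar>f x\<bar> \<le> B1" and B2: "\<forall>x\<in>S. \<bar>g x\<bar> \<le> B2"
    using assms by (auto simp: bounded_on_iff)
  have "\<bar>a * f x + b * g x\<bar> \<le> \<bar>a\<bar> * B1 + \<bar>b\<bar> * B2" if "x \<in> S" for x
  proof -
    have "\<bar>a * f x + b * g x\<bar> \<le> \<bar>a\<bar> * \<bar>f x\<bar> + \<bar>b\<bar> * \<bar>g x\<bar>"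
      by (metis abs_mult abs_triangle_ineq)
    also have "\<dots> \<le> \<bar>a\<bar> * B1 + \<bar>b\<bar> * B2"
      using B1 B2 that by (intro add_mono mult_left_mono) auto
    finally show ?thesis .
  qed
  then show ?thesis by (auto simp: bounded_on_iff)
qed

lemma bounded_on_sum:
  "finite A \<Longrightarrow> (\<forall>s\<in>A. bounded_on S (f s)) \<Longrightarrow> bounded_on S (\<lambda>w. \<Sum>s\<in>A. f s w)"
proof (induction A rule: finite_induct)
  case empty
  then show ?case by (simp add: bounded_on_const)
next
  case (insert a A)
  then have "bounded_on S (\<lambda>w. 1 * f a w + 1 * (\<Sum>s\<in>A. f s w))"
    by (intro bounded_on_linear_comb) auto
  then show ?case using insert by simp
qed

context
  fixes Q :: "(complex \<times> complex \<Rightarrow> real) \<Rightarrow> (complex \<times> complex \<Rightarrow> real)"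
  assumes markov: "markov_op Q"
begin

lemma markov_op_linear:
  "bounded_on circ2 f \<Longrightarrow> bounded_on circ2 g \<Longrightarrow> z \<in> circ2 \<Longrightarrow>
   Q (\<lambda>w. a * f w + b * g w) z = a * Q f z + b * Q g z"
  using markov unfolding markov_op_def by blast

lemma markov_op_nonneg:
  "bounded_on circ2 f \<Longrightarrow> \<forall>w\<in>circ2. 0 \<le> f w \<Longrightarrow> z \<in> circ2 \<Longrightarrow> 0 \<le> Q f z"
  using markov unfolding markov_op_def by blast

lemma markov_op_one: "z \<in> circ2 \<Longrightarrow> Q (\<lambda>_. 1) z = 1"
  using markov unfolding markov_op_def by blast

lemma markov_op_const:
  assumes z: "z \<in> circ2"
  shows "Q (\<lambda>_. c) z = c"
proof -
  have "Q (\<lambda>_. c * 1 + 0 * 1) z = c * Q (\<lambda>_. 1) z + 0 * Q (\<lambda>_. 1) z"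
    by (rule markov_op_linear[OF bounded_on_const bounded_on_const z])
  then show ?thesis using markov_op_one[OF z] by simp
qed

lemma markov_op_cong:
  assumes f: "bounded_on circ2 f" and g: "bounded_on circ2 g"
    and eq: "\<forall>w\<in>circ2. f w = g w" and z: "z \<in> circ2"
  shows "Q f z = Q g z"
proof -
  have "0 \<le> Q (\<lambda>w. 1 * f w + (-1) * g w) z" "0 \<le> Q (\<lambda>w. 1 * g w + (-1) * f w) z"
    using eq by (intro markov_op_nonneg bounded_on_linear_comb f g z; simp)+
  then show ?thesis
    using markov_op_linear[OF f g z, of 1 "-1"] markov_op_linear[OF g f z, of 1 "-1"] by simp
qed

lemma markov_op_abs_le:
  assumes f: "bounded_on circ2 f" and B: "\<forall>w\<in>circ2. \<bar>f w\<bar> \<le> B" and z: "z \<in> circ2"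
  shows "\<bar>Q f z\<bar> \<le> B"
proof -
  have "0 \<le> Q (\<lambda>w. B * 1 + (-1) * f w) z" "0 \<le> Q (\<lambda>w. B * 1 + 1 * f w) z"
    using B by (intro markov_op_nonneg bounded_on_linear_comb f bounded_on_const z;
        auto simp: abs_le_iff)+
  then show ?thesis
    using markov_op_linear[OF bounded_on_const[of _ 1] f z, of B "-1"]
      markov_op_linear[OF bounded_on_const[of _ 1] f z, of B 1] markov_op_one[OF z]
    by (simp add: abs_le_iff)
qed

lemma markov_op_sum:
  "finite A \<Longrightarrow> \<forall>s\<in>A. bounded_on circ2 (f s) \<Longrightarrow> z \<in> circ2 \<Longrightarrow>
   Q (\<lambda>w. \<Sum>s\<in>A. f s w) z = (\<Sum>s\<in>A. Q (f s) z)"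
proof (induction A rule: finite_induct)
  case empty
  then show ?case by (simp add: markov_op_const)
next
  case (insert a A)
  have "Q (\<lambda>w. 1 * f a w + 1 * (\<Sum>s\<in>A. f s w)) z = 1 * Q (f a) z + 1 * Q (\<lambda>w. \<Sum>s\<in>A. f s w) z"
    using insert by (intro markov_op_linear bounded_on_sum) auto
  then show ?case using insert by simp
qed

end

lemma torus_nonempty: "torus N \<noteq> {}"
proof -
  have "(1::complex) \<in> sphere 0 1" by simp
  then show ?thesis unfolding torus_def by (auto simp: PiE_eq_empty_iff)
qed

lemma torus_update:
  "x \<in> torus N \<Longrightarrow> i < N \<Longrightarrow> j < N \<Longrightarrow> (a, b) \<in> circ2 \<Longrightarrow> x(i := a, j := b) \<in> torus N"
  by (auto simp: torus_def circ2_def PiE_iff extensional_def)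

lemma torus_pair_in_circ2: "x \<in> torus N \<Longrightarrow> i < N \<Longrightarrow> j < N \<Longrightarrow> (x i, x j) \<in> circ2"
  by (auto simp: torus_def circ2_def PiE_iff)

lemma abs_le_on_circ2_slice:
  assumes "\<forall>y\<in>torus N. \<bar>\<psi> y\<bar> \<le> B" "x \<in> torus N" "i < N" "j < N"
  shows "\<forall>w\<in>circ2. \<bar>(\<lambda>(a, b). \<psi> (x(i := a, j := b))) w\<bar> \<le> B"
  using assms torus_update by auto

lemma bounded_on_circ2_slice:
  "bounded_on (torus N) \<psi> \<Longrightarrow> x \<in> torus N \<Longrightarrow> i < N \<Longrightarrow> j < N \<Longrightarrow>
   bounded_on circ2 (\<lambda>(a, b). \<psi> (x(i := a, j := b)))"
  using abs_le_on_circ2_slice[of N \<psi> _ x] unfolding bounded_on_iff by blast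

definition depends_only_on :: "nat \<Rightarrow> nat set \<Rightarrow> ((nat \<Rightarrow> complex) \<Rightarrow> real) \<Rightarrow> bool" where
  "depends_only_on N D \<psi> \<longleftrightarrow>
     (\<forall>x\<in>torus N. \<forall>y\<in>torus N. (\<forall>d\<in>D. x d = y d) \<longrightarrow> \<psi> x = \<psi> y)"

lemma depends_only_onD:
  "depends_only_on N D \<psi> \<Longrightarrow> x \<in> torus N \<Longrightarrow> y \<in> torus N \<Longrightarrow> \<forall>d\<in>D. x d = y d \<Longrightarrow> \<psi> x = \<psi> y"
  unfolding depends_only_on_def by blast

definition pairs :: "nat \<Rightarrow> (nat \<times> nat) set" where
  "pairs N = {(i, j). i < j \<and> j < N}"

definition pairs_touching :: "nat \<Rightarrow> nat set \<Rightarrow> (nat \<times> nat) set" where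
  "pairs_touching N D = {p \<in> pairs N. fst p \<in> D \<or> snd p \<in> D}"

lemma finite_pairs: "finite (pairs N)"
  by (rule finite_subset[of _ "{..<N} \<times> {..<N}"]) (auto simp: pairs_def)

lemma finite_pairs_touching: "finite (pairs_touching N D)"
  by (rule finite_subset[OF _ finite_pairs]) (auto simp: pairs_touching_def)

lemma card_pairs_containing_le:
  assumes d: "d < N"
  shows "card {p \<in> pairs N. fst p = d \<or> snd p = d} \<le> N - 1"
proof -
  let ?other = "\<lambda>k. if k < d then (k, d) else (d, k)"
  have "{p \<in> pairs N. fst p = d \<or> snd p = d} \<subseteq> ?other ` ({..<N} - {d})"
  proof
    fix p assume "p \<in> {p \<in> pairs N. fst p = d \<or> snd p = d}"
    then obtain i j where ij: "p = (i, j)" "i < j" "j < N" "i = d \<or> j = d"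
      by (auto simp: pairs_def)
    then show "p \<in> ?other ` ({..<N} - {d})"
      by (cases "i = d") (auto intro: image_eqI[of _ _ j] image_eqI[of _ _ i])
  qed
  then have "card {p \<in> pairs N. fst p = d \<or> snd p = d} \<le> card (?other ` ({..<N} - {d}))"
    by (intro card_mono) auto
  also have "\<dots> \<le> card ({..<N} - {d})" by (rule card_image_le) auto
  also have "\<dots> = N - 1" using d by auto
  finally show ?thesis .
qed

lemma card_pairs_touching_le:
  assumes D: "D \<subseteq> {..<N}"
  shows "card (pairs_touching N D) \<le> card D * (N - 1)"
proof -
  have fD: "finite D" using D finite_subset by blast
  have "pairs_touching N D = (\<Union>d\<in>D. {p \<in> pairs N. fst p = d \<or> snd p = d})"
    by (auto simp: pairs_touching_def)
  then have "card (pairs_touching N D) \<le> (\<Sum>d\<in>D. card {p \<in> pairs N. fst p = d \<or> snd p = d})"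
    using card_UN_le[OF fD] by simp
  also have "\<dots> \<le> (\<Sum>d\<in>D. N - 1)"
    using D card_pairs_containing_le by (intro sum_mono) auto
  finally show ?thesis by simp
qed

lemma card_union_pair_le:
  assumes "finite D" "fst p \<in> D \<or> snd p \<in> D"
  shows "card (D \<union> {fst p, snd p}) \<le> card D + 1"
proof (cases "fst p \<in> D")
  case True
  then have "D \<union> {fst p, snd p} = insert (snd p) D" by auto
  then show ?thesis using assms(1) by (simp add: card_insert_if)
next
  case False
  then have "D \<union> {fst p, snd p} = insert (fst p) D" using assms(2) by auto
  then show ?thesis using assms(1) by (simp add: card_insert_if)
qed

definition pair_term ::
  "nat \<Rightarrow> (nat \<Rightarrow> nat \<Rightarrow> ((complex \<times> complex \<Rightarrow> real) \<Rightarrow> (complex \<times> complex \<Rightarrow> real)))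
   \<Rightarrow> ((nat \<Rightarrow> complex) \<Rightarrow> real) \<Rightarrow> nat \<times> nat \<Rightarrow> ((nat \<Rightarrow> complex) \<Rightarrow> real)" where
  "pair_term N Q \<psi> p =
     (\<lambda>y. case p of (i, j) \<Rightarrow> 2 / (real N - 1) * (lift_op i j (Q i j) \<psi> y - \<psi> y))"

lemma genL_eq_sum_pair_term: "genL N Q \<psi> x = (\<Sum>p\<in>pairs N. pair_term N Q \<psi> p x)"
  by (simp add: genL_def pairs_def pair_term_def sum_distrib_left case_prod_beta)

locale markov_pairs =
  fixes N :: nat
    and Q :: "nat \<Rightarrow> nat \<Rightarrow> ((complex \<times> complex \<Rightarrow> real) \<Rightarrow> (complex \<times> complex \<Rightarrow> real))"
  assumes two_le_N: "2 \<le> N"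
    and markov: "\<And>i j. i < j \<Longrightarrow> j < N \<Longrightarrow> markov_op (Q i j)"
begin

lemma pair_in_range: "(i, j) \<in> pairs N \<Longrightarrow> i < j \<and> i < N \<and> j < N"
  by (auto simp: pairs_def)

lemma lift_op_abs_le:
  assumes "\<forall>y\<in>torus N. \<bar>\<psi> y\<bar> \<le> B" "x \<in> torus N" "i < j" "j < N"
  shows "\<bar>lift_op i j (Q i j) \<psi> x\<bar> \<le> B"
  unfolding lift_op_def using assms abs_le_on_circ2_slice[OF assms(1,2)] torus_pair_in_circ2
  by (intro markov_op_abs_le[OF markov] bounded_on_circ2_slice) (auto simp: bounded_on_iff)

lemma lift_op_cong:
  assumes "bounded_on (torus N) \<psi>" "bounded_on (torus N) \<psi>'"
    and x: "x \<in> torus N" and y: "y \<in> torus N" and ij: "i < j" "j < N"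
    and "x i = y i" "x j = y j"
    and eq: "\<And>a b. (a, b) \<in> circ2 \<Longrightarrow> \<psi> (x(i := a, j := b)) = \<psi>' (y(i := a, j := b))"
  shows "lift_op i j (Q i j) \<psi> x = lift_op i j (Q i j) \<psi>' y"
proof -
  have "Q i j (\<lambda>(a, b). \<psi> (x(i := a, j := b))) (x i, x j)
      = Q i j (\<lambda>(a, b). \<psi>' (y(i := a, j := b))) (x i, x j)"
    using assms torus_pair_in_circ2[OF x, of i j]
    by (intro markov_op_cong[OF markov] bounded_on_circ2_slice) auto
  then show ?thesis unfolding lift_op_def using assms by simp
qed

lemma lift_op_sum:
  assumes S: "finite S" and g: "\<forall>s\<in>S. bounded_on (torus N) (g s)"
    and x: "x \<in> torus N" and ij: "i < j" "j < N"
  shows "lift_op i j (Q i j) (\<lambda>y. \<Sum>s\<in>S. g s y) x = (\<Sum>s\<in>S. lift_op i j (Q i j) (g s) x)"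
proof -
  have "(\<lambda>(a, b). \<Sum>s\<in>S. g s (x(i := a, j := b))) = (\<lambda>w. \<Sum>s\<in>S. (\<lambda>(a, b). g s (x(i := a, j := b))) w)"
    by (rule ext) (simp add: case_prod_beta)
  then show ?thesis
    unfolding lift_op_def using ij g bounded_on_circ2_slice[OF _ x]
    by (simp add: markov_op_sum[OF markov[OF ij] S _ torus_pair_in_circ2[OF x]])
qed

lemma lift_op_fixes:
  assumes dep: "depends_only_on N D \<psi>" and bdd: "bounded_on (torus N) \<psi>"
    and x: "x \<in> torus N" and ij: "i < j" "j < N" "i \<notin> D" "j \<notin> D"
  shows "lift_op i j (Q i j) \<psi> x = \<psi> x"
proof -
  have "lift_op i j (Q i j) \<psi> x = lift_op i j (Q i j) (\<lambda>_. \<psi> x) x"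
  proof (rule lift_op_cong[OF bdd bounded_on_const x x ij(1,2) refl refl])
    fix a b assume "(a, b) \<in> circ2"
    then have "x(i := a, j := b) \<in> torus N" using torus_update[OF x, of i j a b] ij(1,2) by simp
    moreover have "\<forall>d\<in>D. (x(i := a, j := b)) d = x d" using ij(3,4) by auto
    ultimately show "\<psi> (x(i := a, j := b)) = \<psi> x"
      using depends_only_onD[OF dep _ x] by blast
  qed
  also have "\<dots> = \<psi> x"
    unfolding lift_op_def using markov_op_const[OF markov[OF ij(1,2)]] torus_pair_in_circ2[OF x] ij
    by (simp add: split_def)
  finally show ?thesis .
qed

lemma pair_term_abs_le:
  assumes B: "\<forall>y\<in>torus N. \<bar>\<psi> y\<bar> \<le> B" and p: "p \<in> pairs N" and y: "y \<in> torus N"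
  shows "\<bar>pair_term N Q \<psi> p y\<bar> \<le> 2 / (real N - 1) * (2 * B)"
proof -
  obtain i j where ij: "p = (i, j)" "i < j" "j < N" using p by (auto simp: pairs_def)
  have "\<bar>lift_op i j (Q i j) \<psi> y - \<psi> y\<bar> \<le> 2 * B"
    using lift_op_abs_le[OF B y ij(2,3)] B y by auto
  moreover have "0 < 2 / (real N - 1)" using two_le_N by simp
  ultimately have "2 / (real N - 1) * \<bar>lift_op i j (Q i j) \<psi> y - \<psi> y\<bar> \<le> 2 / (real N - 1) * (2 * B)"
    by (intro mult_left_mono) auto
  then show ?thesis
    unfolding pair_term_def ij prod.case abs_mult using two_le_N by simp
qed

lemma bounded_on_pair_term:
  "bounded_on (torus N) \<psi> \<Longrightarrow> p \<in> pairs N \<Longrightarrow> bounded_on (torus N) (pair_term N Q \<psi> p)"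
  using pair_term_abs_le unfolding bounded_on_iff by meson

lemma bounded_on_genL: "bounded_on (torus N) \<psi> \<Longrightarrow> bounded_on (torus N) (genL N Q \<psi>)"
  using bounded_on_sum[OF finite_pairs[of N], of "torus N" "pair_term N Q \<psi>"] bounded_on_pair_term
  unfolding genL_eq_sum_pair_term by blast

lemma bounded_on_genL_funpow: "bounded_on (torus N) \<psi> \<Longrightarrow> bounded_on (torus N) ((genL N Q ^^ k) \<psi>)"
  by (induction k) (auto intro: bounded_on_genL)

lemma genL_cong:
  assumes "bounded_on (torus N) \<psi>" "bounded_on (torus N) \<psi>'"
    and eq: "\<forall>y\<in>torus N. \<psi> y = \<psi>' y" and x: "x \<in> torus N"
  shows "genL N Q \<psi> x = genL N Q \<psi>' x"
proof -
  have "lift_op i j (Q i j) \<psi> x = lift_op i j (Q i j) \<psi>' x" if "(i, j) \<in> pairs N" for i j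
    using assms pair_in_range[OF that] torus_update[OF x, of i j]
    by (intro lift_op_cong) auto
  then show ?thesis
    unfolding genL_eq_sum_pair_term pair_term_def using eq x
    by (intro sum.cong refl) (auto split: prod.splits)
qed

lemma genL_sum:
  assumes S: "finite S" and g: "\<forall>s\<in>S. bounded_on (torus N) (g s)" and x: "x \<in> torus N"
  shows "genL N Q (\<lambda>y. \<Sum>s\<in>S. g s y) x = (\<Sum>s\<in>S. genL N Q (g s) x)"
proof -
  have "pair_term N Q (\<lambda>y. \<Sum>s\<in>S. g s y) p x = (\<Sum>s\<in>S. pair_term N Q (g s) p x)"
    if p: "p \<in> pairs N" for p
  proof -
    obtain i j where ij: "p = (i, j)" "i < j" "j < N" using p by (auto simp: pairs_def)
    show ?thesis
      unfolding pair_term_def ij prod.case lift_op_sum[OF S g x ij(2,3)]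
      by (simp only: sum_subtractf[symmetric] sum_distrib_left)
  qed
  then show ?thesis
    unfolding genL_eq_sum_pair_term by (simp add: sum.swap[of _ S])
qed

lemma genL_funpow_cong:
  "bounded_on (torus N) \<psi> \<Longrightarrow> bounded_on (torus N) \<psi>' \<Longrightarrow> \<forall>y\<in>torus N. \<psi> y = \<psi>' y \<Longrightarrow>
   \<forall>x\<in>torus N. (genL N Q ^^ k) \<psi> x = (genL N Q ^^ k) \<psi>' x"
  by (induction k) (auto intro!: genL_cong bounded_on_genL_funpow)

lemma genL_funpow_sum:
  assumes S: "finite S" and g: "\<forall>s\<in>S. bounded_on (torus N) (g s)"
  shows "\<forall>x\<in>torus N. (genL N Q ^^ k) (\<lambda>y. \<Sum>s\<in>S. g s y) x = (\<Sum>s\<in>S. (genL N Q ^^ k) (g s) x)"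
proof (induction k)
  case 0
  then show ?case by simp
next
  case (Suc k)
  have "genL N Q ((genL N Q ^^ k) (\<lambda>y. \<Sum>s\<in>S. g s y)) x
      = (\<Sum>s\<in>S. genL N Q ((genL N Q ^^ k) (g s)) x)" if x: "x \<in> torus N" for x
  proof -
    have "genL N Q ((genL N Q ^^ k) (\<lambda>y. \<Sum>s\<in>S. g s y)) x
        = genL N Q (\<lambda>y. \<Sum>s\<in>S. (genL N Q ^^ k) (g s) y) x"
      using Suc x S g
      by (intro genL_cong bounded_on_genL_funpow bounded_on_sum) (auto intro: bounded_on_genL_funpow)
    also have "\<dots> = (\<Sum>s\<in>S. genL N Q ((genL N Q ^^ k) (g s)) x)"
      using x S g by (intro genL_sum) (auto intro: bounded_on_genL_funpow)
    finally show ?thesis .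
  qed
  then show ?case by simp
qed

lemma genL_eq_sum_touching:
  assumes dep: "depends_only_on N D \<psi>" and bdd: "bounded_on (torus N) \<psi>" and x: "x \<in> torus N"
  shows "genL N Q \<psi> x = (\<Sum>p\<in>pairs_touching N D. pair_term N Q \<psi> p x)"
  unfolding genL_eq_sum_pair_term
proof (rule sum.mono_neutral_right[OF finite_pairs])
  show "pairs_touching N D \<subseteq> pairs N" by (auto simp: pairs_touching_def)
  show "\<forall>p\<in>pairs N - pairs_touching N D. pair_term N Q \<psi> p x = 0"
  proof
    fix p assume "p \<in> pairs N - pairs_touching N D"
    then obtain i j where ij: "p = (i, j)" "i < j" "j < N" "i \<notin> D" "j \<notin> D"
      by (auto simp: pairs_def pairs_touching_def)
    show "pair_term N Q \<psi> p x = 0"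
      unfolding pair_term_def ij prod.case lift_op_fixes[OF dep bdd x ij(2-5)] by simp
  qed
qed

lemma depends_only_on_pair_term:
  assumes dep: "depends_only_on N D \<psi>" and bdd: "bounded_on (torus N) \<psi>" and p: "p \<in> pairs N"
  shows "depends_only_on N (D \<union> {fst p, snd p}) (pair_term N Q \<psi> p)"
  unfolding depends_only_on_def
proof (intro ballI impI)
  fix x y assume x: "x \<in> torus N" and y: "y \<in> torus N"
    and agree: "\<forall>d\<in>D \<union> {fst p, snd p}. x d = y d"
  obtain i j where ij: "p = (i, j)" "i < j" "j < N" using p by (auto simp: pairs_def)
  have "lift_op i j (Q i j) \<psi> x = lift_op i j (Q i j) \<psi> y"
  proof (rule lift_op_cong[OF bdd bdd x y ij(2,3)])
    show "x i = y i" "x j = y j" using agree ij(1) by auto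
    fix a b assume "(a, b) \<in> circ2"
    then have "x(i := a, j := b) \<in> torus N" "y(i := a, j := b) \<in> torus N"
      using torus_update[OF x, of i j a b] torus_update[OF y, of i j a b] ij(2,3) by simp_all
    moreover have "\<forall>d\<in>D. (x(i := a, j := b)) d = (y(i := a, j := b)) d" using agree by auto
    ultimately show "\<psi> (x(i := a, j := b)) = \<psi> (y(i := a, j := b))"
      using depends_only_onD[OF dep] by blast
  qed
  moreover have "\<psi> x = \<psi> y" using depends_only_onD[OF dep x y] agree by blast
  ultimately show "pair_term N Q \<psi> p x = pair_term N Q \<psi> p y"
    unfolding pair_term_def ij by simp
qed

lemma genL_funpow_Suc_eq_sum_touching:
  assumes dep: "depends_only_on N D \<psi>" and bdd: "bounded_on (torus N) \<psi>" and x: "x \<in> torus N"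
  shows "(genL N Q ^^ Suc k) \<psi> x = (\<Sum>p\<in>pairs_touching N D. (genL N Q ^^ k) (pair_term N Q \<psi> p) x)"
proof -
  have bdd_terms: "\<forall>p\<in>pairs_touching N D. bounded_on (torus N) (pair_term N Q \<psi> p)"
    using bdd bounded_on_pair_term by (auto simp: pairs_touching_def)
  have "(genL N Q ^^ Suc k) \<psi> x = (genL N Q ^^ k) (genL N Q \<psi>) x"
    by (simp only: funpow_Suc_right o_apply)
  also have "\<dots> = (genL N Q ^^ k) (\<lambda>y. \<Sum>p\<in>pairs_touching N D. pair_term N Q \<psi> p y) x"
    using genL_funpow_cong[OF bounded_on_genL[OF bdd] bounded_on_sum[OF finite_pairs_touching bdd_terms]]
      genL_eq_sum_touching[OF dep bdd] x by blast
  also have "\<dots> = (\<Sum>p\<in>pairs_touching N D. (genL N Q ^^ k) (pair_term N Q \<psi> p) x)"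
    using genL_funpow_sum[OF finite_pairs_touching bdd_terms] x by blast
  finally show ?thesis .
qed

lemma genL_funpow_abs_le:
  "D \<subseteq> {..<N} \<Longrightarrow> card D \<le> m \<Longrightarrow> depends_only_on N D \<psi> \<Longrightarrow> \<forall>y\<in>torus N. \<bar>\<psi> y\<bar> \<le> B \<Longrightarrow>
   x \<in> torus N \<Longrightarrow> \<bar>(genL N Q ^^ k) \<psi> x\<bar> \<le> 4 ^ k * pochhammer (real m) k * B"
proof (induction k arbitrary: \<psi> D m B x)
  case 0
  then show ?case by simp
next
  case (Suc k)
  note D = Suc.prems(1) and card_D = Suc.prems(2) and dep = Suc.prems(3)
    and B = Suc.prems(4) and x = Suc.prems(5)
  have bdd: "bounded_on (torus N) \<psi>" using B unfolding bounded_on_iff by blast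
  have B_nonneg: "0 \<le> B" using B torus_nonempty by fastforce
  define K where "K = 4 ^ k * pochhammer (real (m + 1)) k * (2 / (real N - 1) * (2 * B))"
  have K_nonneg: "0 \<le> K"
    unfolding K_def using two_le_N B_nonneg by (simp add: pochhammer_pos less_imp_le)
  have term_le: "\<bar>(genL N Q ^^ k) (pair_term N Q \<psi> p) x\<bar> \<le> K" if p: "p \<in> pairs_touching N D" for p
  proof -
    have pp: "p \<in> pairs N" and touch: "fst p \<in> D \<or> snd p \<in> D"
      using p by (auto simp: pairs_touching_def)
    have "D \<union> {fst p, snd p} \<subseteq> {..<N}" using D pair_in_range[of "fst p" "snd p"] pp by auto
    moreover have "card (D \<union> {fst p, snd p}) \<le> m + 1"
      using card_union_pair_le[OF finite_subset[OF D] touch] card_D by simp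
    ultimately have "\<bar>(genL N Q ^^ k) (pair_term N Q \<psi> p) x\<bar>
        \<le> 4 ^ k * pochhammer (real (m + 1)) k * (2 / (real N - 1) * (2 * B))"
      using Suc.IH[OF _ _ depends_only_on_pair_term[OF dep bdd pp] _ x] pair_term_abs_le[OF B pp]
      by blast
    then show ?thesis unfolding K_def .
  qed
  have "\<bar>(genL N Q ^^ Suc k) \<psi> x\<bar> \<le> real (card (pairs_touching N D)) * K"
    unfolding genL_funpow_Suc_eq_sum_touching[OF dep bdd x]
    using term_le by (intro order_trans[OF sum_abs] sum_bounded_above) auto
  also have "\<dots> \<le> real m * (real N - 1) * K"
  proof (rule mult_right_mono[OF _ K_nonneg])
    have "card (pairs_touching N D) \<le> m * (N - 1)"
      using card_pairs_touching_le[OF D] card_D by (meson le_trans mult_le_mono1)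
    then have "real (card (pairs_touching N D)) \<le> real (m * (N - 1))" by linarith
    then show "real (card (pairs_touching N D)) \<le> real m * (real N - 1)"
      using two_le_N by (simp add: of_nat_diff)
  qed
  also have "\<dots> = 4 ^ Suc k * pochhammer (real m) (Suc k) * B"
    using two_le_N unfolding K_def by (simp add: pochhammer_rec field_simps)
  finally show ?case .
qed

end

lemma pochhammer_of_nat_nonneg: "0 \<le> pochhammer (real m) k"
  by (induction k) (auto simp: pochhammer_Suc)

lemma summable_pochhammer_series:
  assumes "0 \<le> r" "r < 1"
  shows "summable (\<lambda>k. r ^ k * pochhammer (real m) k / fact k)"
proof -
  have "summable (\<lambda>k. ((- real m) gchoose k) * (- r) ^ k)"
    using gen_binomial_real[of "- r" "- real m"] assms by (auto intro: sums_summable)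
  moreover have "((- real m) gchoose k) * (- r) ^ k = r ^ k * pochhammer (real m) k / fact k" for k
  proof -
    have "((- real m) gchoose k) * (- r) ^ k
        = ((-1) ^ k * (-1) ^ k) * (pochhammer (real m) k / fact k * r ^ k)"
      by (simp add: gbinomial_pochhammer power_minus[of r])
    also have "(-1::real) ^ k * (-1) ^ k = 1" by (simp add: power_mult_distrib[symmetric])
    finally show ?thesis by simp
  qed
  ultimately show ?thesis by simp
qed

theorem mainTheorem4:
  fixes q :: "nat \<Rightarrow> nat \<Rightarrow> nat \<Rightarrow> ((complex \<times> complex \<Rightarrow> real) \<Rightarrow> (complex \<times> complex \<Rightarrow> real))"
    and \<phi> :: "(nat \<Rightarrow> complex) \<Rightarrow> real"
    and p :: nat and T :: real
  assumes markov: "\<And>N i j. 2 \<le> N \<Longrightarrow> i < j \<Longrightarrow> j < N \<Longrightarrow> markov_op (q N i j)"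
    and bdd: "bounded_on (torus p) \<phi>"
    and T: "T < 1/4"
  shows "\<exists>c::nat \<Rightarrow> real. summable c \<and>
     (\<forall>N k t. 2 \<le> N \<longrightarrow> p \<le> N \<longrightarrow> t \<in> {0..T} \<longrightarrow>
        t ^ k / fact k * supnorm N ((genL N (q N) ^^ k) (\<lambda>x. \<phi> (restrict x {..<p}))) \<le> c k)"
proof -
  obtain B where B: "\<forall>y\<in>torus p. \<bar>\<phi> y\<bar> \<le> B" using bdd unfolding bounded_on_iff by blast
  define T' where "T' = max T 0"
  define c where "c k = (4 * T') ^ k * pochhammer (real p) k / fact k * B" for k
  have "summable c"
    unfolding c_def using T by (intro summable_mult2 summable_pochhammer_series) (auto simp: T'_def)
  moreover have "t ^ k / fact k * supnorm N ((genL N (q N) ^^ k) (\<lambda>x. \<phi> (restrict x {..<p}))) \<le> c k"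
    if N: "2 \<le> N" "p \<le> N" and t: "t \<in> {0..T}" for N k t
  proof -
    interpret markov_pairs N "q N" using markov N(1) by unfold_locales
    define \<psi> where "\<psi> x = \<phi> (restrict x {..<p})" for x
    have "depends_only_on N {..<p} \<psi>"
      unfolding depends_only_on_def \<psi>_def by (auto intro!: arg_cong[where f=\<phi>] restrict_ext)
    moreover have "\<forall>y\<in>torus N. \<bar>\<psi> y\<bar> \<le> B"
      unfolding \<psi>_def using B N(2) by (auto simp: torus_def PiE_iff)
    ultimately have "\<bar>(genL N (q N) ^^ k) \<psi> x\<bar> \<le> 4 ^ k * pochhammer (real p) k * B"
      if "x \<in> torus N" for x
      using genL_funpow_abs_le[of "{..<p}" p] N(2) that by auto
    then have "supnorm N ((genL N (q N) ^^ k) \<psi>) \<le> 4 ^ k * pochhammer (real p) k * B"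
      unfolding supnorm_def using torus_nonempty by (intro cSUP_least) auto
    moreover have "0 \<le> B" using B torus_nonempty by fastforce
    moreover have "0 \<le> t" "t \<le> T'" using t by (auto simp: T'_def)
    ultimately have "t ^ k / fact k * supnorm N ((genL N (q N) ^^ k) \<psi>)
        \<le> T' ^ k / fact k * (4 ^ k * pochhammer (real p) k * B)"
      using pochhammer_of_nat_nonneg[of p k]
      by (intro order_trans[OF mult_left_mono mult_right_mono] divide_right_mono power_mono) auto
    then show ?thesis unfolding c_def \<psi>_def by (simp add: power_mult_distrib mult_ac)
  qed
  ultimately show ?thesis by blast
qed

end
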